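(* For each $n\ge0$ let $a_{n,0},\dots,a_{n,n}\in\mathbb C$ and let $P_n$ be the associated polynomial. Then $$a_{n,n}=\frac{1}{\imath^{n}n!}P_n\!\left(\frac{\imath}{2}\right).$$ Consequently, if $G(z,t)=\sum_{n\ge0}\frac{P_n(z)}{n!}t^n$ (as a formal power series in $t$), then $$\sum_{n\ge0}a_{n,n}t^n=G\!\left(\frac{\imath}{2},\frac{t}{\imath}\right).$$
   Context: $\imath=\sqrt{-1}$. $\mathcal{A}$ denotes the quotient of the free associative $\mathbb{C}$-algebra on two noncommuting generators $p,q$ by the two-sided ideal generated by $qp-pq-\imath$, and $z=\tfrac12(qp+pq)\in\mathcal A$. For $n\ge0$ and complex numbers $a_{n,0},\dots,a_{n,n}$, there is a unique polynomial $P_n\in\mathbb{C}[X]$ of degree at most $n$ with $\sum_{k=0}^n a_{n,k}q^kp^nq^{n-k}=P_n(z)$ in $\mathcal A$; it is called the polynomial associated to $\{a_{n,k}\}$. *)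

theory Defs
  imports Complex_Main "HOL-Computational_Algebra.Polynomial"
    "HOL-Computational_Algebra.Formal_Power_Series"
begin

text \<open>The free associative C-algebra on two generators p, q: finitely supported
  functions from words over the alphabet {P,Q} to C, with concatenation-convolution product.\<close>

datatype gen = Pg | Qg

type_synonym fa = "gen list \<Rightarrow> complex"

definition fa_mon :: "gen list \<Rightarrow> fa" where
  "fa_mon w = (\<lambda>v. if v = w then 1 else 0)"

definition fa_add :: "fa \<Rightarrow> fa \<Rightarrow> fa" where
  "fa_add f g = (\<lambda>w. f w + g w)"

definition fa_smult :: "complex \<Rightarrow> fa \<Rightarrow> fa" where
  "fa_smult c f = (\<lambda>w. c * f w)"

definition fa_mult :: "fa \<Rightarrow> fa \<Rightarrow> fa" where
  "fa_mult f g = (\<lambda>w. \<Sum>k\<le>length w. f (take k w) * g (drop k w))"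

definition fa_sum :: "('i \<Rightarrow> fa) \<Rightarrow> 'i set \<Rightarrow> fa" where
  "fa_sum F A = (\<lambda>w. \<Sum>i\<in>A. F i w)"

definition fa_one :: fa where
  "fa_one = fa_mon []"

fun fa_pow :: "fa \<Rightarrow> nat \<Rightarrow> fa" where
  "fa_pow x 0 = fa_one"
| "fa_pow x (Suc n) = fa_mult x (fa_pow x n)"

definition fa_p :: fa where "fa_p = fa_mon [Pg]"
definition fa_q :: fa where "fa_q = fa_mon [Qg]"

definition weyl_rel :: fa where
  "weyl_rel = fa_add (fa_mult fa_q fa_p)
      (fa_add (fa_smult (-1) (fa_mult fa_p fa_q)) (fa_smult (- \<i>) fa_one))"

inductive_set weyl_ideal :: "fa set" where
  zero: "(\<lambda>_. 0) \<in> weyl_ideal"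
| add: "x \<in> weyl_ideal \<Longrightarrow> y \<in> weyl_ideal \<Longrightarrow> fa_add x y \<in> weyl_ideal"
| smult: "x \<in> weyl_ideal \<Longrightarrow> fa_smult c x \<in> weyl_ideal"
| gen: "fa_mult (fa_mon u) (fa_mult weyl_rel (fa_mon v)) \<in> weyl_ideal"

definition weyl_eq :: "fa \<Rightarrow> fa \<Rightarrow> bool" where
  "weyl_eq f g \<longleftrightarrow> fa_add f (fa_smult (-1) g) \<in> weyl_ideal"

definition weyl_z :: fa where
  "weyl_z = fa_smult (1/2) (fa_add (fa_mult fa_q fa_p) (fa_mult fa_p fa_q))"

definition fa_poly :: "complex poly \<Rightarrow> fa \<Rightarrow> fa" where
  "fa_poly P x = fa_sum (\<lambda>i. fa_smult (coeff P i) (fa_pow x i)) {..degree P}"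

definition assoc_poly :: "(nat \<Rightarrow> complex) \<Rightarrow> nat \<Rightarrow> complex poly \<Rightarrow> bool" where
  "assoc_poly a n P \<longleftrightarrow> degree P \<le> n \<and>
     weyl_eq (fa_sum (\<lambda>k. fa_smult (a k)
                 (fa_mult (fa_pow fa_q k) (fa_mult (fa_pow fa_p n) (fa_pow fa_q (n - k))))) {..n})
             (fa_poly P weyl_z)"

definition gen_series :: "(nat \<Rightarrow> complex poly) \<Rightarrow> complex poly fps" where
  "gen_series P = Abs_fps (\<lambda>n. smult (1 / fact n) (P n))"

definition eval_coeffs :: "complex poly fps \<Rightarrow> complex \<Rightarrow> complex fps" where
  "eval_coeffs G z = Abs_fps (\<lambda>n. poly (fps_nth G n) z)"

end

theory Submission imports Defs begin

text \<open>Let the free algebra act on C[X] by q \<mapsto> d/dX and p \<mapsto> multiplication by iX.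
  Then qp - pq acts as multiplication by i, so the action factors through the Weyl algebra, and
  z acts on constants as multiplication by i/2. Apply both sides of the identity defining P_n to
  the constant 1 and take constant terms: q^k p^n q^(n-k) kills 1 unless k = n, q^n p^n sends 1
  to i^n n!, and P_n(z) sends 1 to P_n(i/2). The generating function identity is then the
  substitution t \<mapsto> t/i.\<close>

fun word_act :: "gen list \<Rightarrow> complex poly \<Rightarrow> complex poly" where
  "word_act [] f = f"
| "word_act (Qg # w) f = pderiv (word_act w f)"
| "word_act (Pg # w) f = [:0, \<i>:] * word_act w f"

lemma word_act_Cons:
  "word_act (x # w) f = (case x of Qg \<Rightarrow> pderiv (word_act w f) | Pg \<Rightarrow> [:0, \<i>:] * word_act w f)"
  by (cases x) auto

lemma word_act_append: "word_act (u @ v) f = word_act u (word_act v f)"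
  by (induction u arbitrary: f) (auto simp: word_act_Cons split: gen.split)

lemma word_act_add: "word_act w (f + g) = word_act w f + word_act w g"
  by (induction w) (auto simp: word_act_Cons pderiv_add algebra_simps split: gen.split)

lemma word_act_smult: "word_act w (smult c f) = smult c (word_act w f)"
  by (induction w) (auto simp: word_act_Cons pderiv_smult split: gen.split)

lemma word_act_0 [simp]: "word_act w 0 = 0"
  by (induction w) (auto simp: word_act_Cons split: gen.split)

lemma word_act_diff: "word_act w (f - g) = word_act w f - word_act w g"
  using word_act_add[of w "f - g" g] by simp

lemma word_act_sum: "finite A \<Longrightarrow> word_act w (\<Sum>i\<in>A. F i) = (\<Sum>i\<in>A. word_act w (F i))"
  by (induction A rule: finite_induct) (auto simp: word_act_add)

lemma word_act_commutator: "word_act [Qg, Pg] f - word_act [Pg, Qg] f = smult \<i> f"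
  by (simp add: pderiv_mult pderiv_pCons pderiv_smult algebra_simps)

lemma word_act_replicate_Qg: "word_act (replicate m Qg) f = (pderiv ^^ m) f"
  by (induction m) auto

lemma word_act_replicate_Pg: "word_act (replicate m Pg) f = [:0, \<i>:] ^ m * f"
  by (induction m) auto

lemma smult_sum_right: "smult c (\<Sum>i\<in>A. F i) = (\<Sum>i\<in>A. smult c (F i))"
  by (induction A rule: infinite_finite_induct) (auto simp: smult_add_right)

lemma coeff_linear_monom_power: "coeff ([:0, c:] ^ n) n = c ^ n"
  by (induction n) (auto simp: mult_pCons_left)

lemma coeff_0_word_act_normal_ordered:
  assumes "k \<le> n"
  shows "coeff (word_act (replicate k Qg @ replicate n Pg @ replicate (n - k) Qg) 1) 0 =
    (if k = n then \<i> ^ n * fact n else 0)"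
proof (cases "k = n")
  case True
  then show ?thesis
    by (simp add: word_act_append word_act_replicate_Qg word_act_replicate_Pg
        coeff_higher_pderiv coeff_linear_monom_power pochhammer_fact)
next
  case False
  then obtain m where "n - k = Suc m"
    using assms by (metis Suc_diff_Suc le_neq_implies_less)
  then have "replicate (n - k) Qg = replicate m Qg @ [Qg]"
    by (simp add: replicate_append_same)
  then show ?thesis
    using False by (simp add: word_act_append)
qed

definition fa_supp :: "fa \<Rightarrow> gen list set" where
  "fa_supp f = {w. f w \<noteq> 0}"

text \<open>The linear extension of word_act; it is meaningful only for finitely supported f.\<close>
definition fa_act :: "fa \<Rightarrow> complex poly \<Rightarrow> complex poly" where
  "fa_act f h = (\<Sum>w\<in>fa_supp f. smult (f w) (word_act w h))"

lemma fa_act_eq_sum_superset: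
  assumes "finite S" "fa_supp f \<subseteq> S"
  shows "fa_act f h = (\<Sum>w\<in>S. smult (f w) (word_act w h))"
  unfolding fa_act_def
  by (rule sum.mono_neutral_left) (use assms in \<open>auto simp: fa_supp_def\<close>)

lemma fa_supp_add: "fa_supp (fa_add f g) \<subseteq> fa_supp f \<union> fa_supp g"
  by (auto simp: fa_supp_def fa_add_def)

lemma fa_supp_smult: "fa_supp (fa_smult c f) \<subseteq> fa_supp f"
  by (auto simp: fa_supp_def fa_smult_def)

lemma fa_supp_mon: "fa_supp (fa_mon w) = {w}"
  by (auto simp: fa_supp_def fa_mon_def)

lemma finite_fa_supp_add: "finite (fa_supp f) \<Longrightarrow> finite (fa_supp g) \<Longrightarrow> finite (fa_supp (fa_add f g))"
  by (meson fa_supp_add finite_UnI finite_subset)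

lemma finite_fa_supp_smult: "finite (fa_supp f) \<Longrightarrow> finite (fa_supp (fa_smult c f))"
  by (meson fa_supp_smult finite_subset)

lemma fa_act_add:
  assumes "finite (fa_supp f)" "finite (fa_supp g)"
  shows "fa_act (fa_add f g) h = fa_act f h + fa_act g h"
proof -
  let ?S = "fa_supp f \<union> fa_supp g"
  have "fa_act (fa_add f g) h = (\<Sum>w\<in>?S. smult (fa_add f g w) (word_act w h))"
    using assms fa_supp_add by (intro fa_act_eq_sum_superset) auto
  also have "\<dots> = (\<Sum>w\<in>?S. smult (f w) (word_act w h)) + (\<Sum>w\<in>?S. smult (g w) (word_act w h))"
    by (simp add: fa_add_def smult_add_left sum.distrib)
  also have "\<dots> = fa_act f h + fa_act g h"
    using assms by (simp add: fa_act_eq_sum_superset[of ?S f] fa_act_eq_sum_superset[of ?S g])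
  finally show ?thesis .
qed

lemma fa_act_smult:
  assumes "finite (fa_supp f)"
  shows "fa_act (fa_smult c f) h = smult c (fa_act f h)"
proof -
  have "fa_act (fa_smult c f) h = (\<Sum>w\<in>fa_supp f. smult (fa_smult c f w) (word_act w h))"
    using assms fa_supp_smult by (intro fa_act_eq_sum_superset) auto
  then show ?thesis
    by (simp add: fa_act_def fa_smult_def smult_sum_right)
qed

lemma fa_act_mon: "fa_act (fa_mon w) h = word_act w h"
  by (simp add: fa_act_def fa_supp_mon) (simp add: fa_mon_def)

lemma fa_mult_add_left: "fa_mult (fa_add f g) h = fa_add (fa_mult f h) (fa_mult g h)"
  by (simp add: fa_mult_def fa_add_def algebra_simps sum.distrib)

lemma fa_mult_add_right: "fa_mult h (fa_add f g) = fa_add (fa_mult h f) (fa_mult h g)"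
  by (simp add: fa_mult_def fa_add_def algebra_simps sum.distrib)

lemma fa_mult_smult_left: "fa_mult (fa_smult c f) h = fa_smult c (fa_mult f h)"
  by (simp add: fa_mult_def fa_smult_def sum_distrib_left algebra_simps)

lemma fa_mult_smult_right: "fa_mult h (fa_smult c f) = fa_smult c (fa_mult h f)"
  by (simp add: fa_mult_def fa_smult_def sum_distrib_left algebra_simps)

lemma fa_mult_mon_left:
  "fa_mult (fa_mon u) f = (\<lambda>w. if take (length u) w = u then f (drop (length u) w) else 0)"
proof
  fix w
  show "fa_mult (fa_mon u) f w = (if take (length u) w = u then f (drop (length u) w) else 0)"
  proof (cases "take (length u) w = u")
    case True
    then have "length u \<le> length w"
      by (metis length_take min.absorb_iff2 nat_le_linear)
    moreover have "take k w = u \<longleftrightarrow> k = length u" if "k \<le> length w" for k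
      using that True by auto
    ultimately have "fa_mult (fa_mon u) f w = (\<Sum>k\<le>length w. if k = length u then f (drop k w) else 0)"
      unfolding fa_mult_def fa_mon_def by (intro sum.cong) auto
    with \<open>length u \<le> length w\<close> True show ?thesis
      by (simp add: sum.delta)
  next
    case False
    then have "take k w \<noteq> u" if "k \<le> length w" for k
      using that by (metis length_take min.absorb_iff2)
    then show ?thesis
      using False unfolding fa_mult_def fa_mon_def by simp
  qed
qed

lemma fa_mult_mon_mon: "fa_mult (fa_mon u) (fa_mon v) = fa_mon (u @ v)"
proof
  fix w
  have "w = u @ v \<longleftrightarrow> take (length u) w = u \<and> drop (length u) w = v"
    using append_eq_conv_conj[of u v w] by auto
  then show "fa_mult (fa_mon u) (fa_mon v) w = fa_mon (u @ v) w"
    unfolding fa_mult_mon_left by (simp add: fa_mon_def)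
qed

lemma fa_pow_mon_single: "fa_pow (fa_mon [x]) n = fa_mon (replicate n x)"
  by (induction n) (simp_all add: fa_one_def fa_mult_mon_mon)

lemma fa_supp_mult_mon: "fa_supp (fa_mult (fa_mon u) f) = (\<lambda>v. u @ v) ` fa_supp f"
proof
  show "fa_supp (fa_mult (fa_mon u) f) \<subseteq> (\<lambda>v. u @ v) ` fa_supp f"
  proof
    fix w assume "w \<in> fa_supp (fa_mult (fa_mon u) f)"
    then have "take (length u) w = u" "f (drop (length u) w) \<noteq> 0"
      unfolding fa_supp_def fa_mult_mon_left by (auto split: if_splits)
    then show "w \<in> (\<lambda>v. u @ v) ` fa_supp f"
      unfolding fa_supp_def by (metis (mono_tags, lifting) append_take_drop_id image_eqI mem_Collect_eq)
  qed
qed (auto simp: fa_supp_def fa_mult_mon_left)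

lemma fa_act_mult_mon:
  assumes "finite (fa_supp f)"
  shows "fa_act (fa_mult (fa_mon u) f) h = word_act u (fa_act f h)"
proof -
  have "fa_act (fa_mult (fa_mon u) f) h =
      (\<Sum>w\<in>(\<lambda>v. u @ v) ` fa_supp f. smult (fa_mult (fa_mon u) f w) (word_act w h))"
    by (simp add: fa_act_def fa_supp_mult_mon)
  also have "\<dots> = (\<Sum>v\<in>fa_supp f. smult (f v) (word_act (u @ v) h))"
    by (subst sum.reindex) (auto simp: inj_on_def fa_mult_mon_left)
  also have "\<dots> = word_act u (fa_act f h)"
    by (simp add: fa_act_def word_act_sum assms word_act_smult word_act_append)
  finally show ?thesis .
qed

lemma fa_sum_insert:
  "finite A \<Longrightarrow> i \<notin> A \<Longrightarrow> fa_sum F (insert i A) = fa_add (F i) (fa_sum F A)"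
  by (simp add: fa_sum_def fa_add_def)

lemma finite_fa_supp_sum:
  "finite A \<Longrightarrow> (\<And>i. i \<in> A \<Longrightarrow> finite (fa_supp (F i))) \<Longrightarrow> finite (fa_supp (fa_sum F A))"
proof (induction A rule: finite_induct)
  case empty
  then show ?case by (simp add: fa_supp_def fa_sum_def)
qed (simp add: fa_sum_insert finite_fa_supp_add)

lemma fa_act_sum:
  "finite A \<Longrightarrow> (\<And>i. i \<in> A \<Longrightarrow> finite (fa_supp (F i))) \<Longrightarrow>
    fa_act (fa_sum F A) h = (\<Sum>i\<in>A. fa_act (F i) h)"
proof (induction A rule: finite_induct)
  case empty
  then show ?case by (simp add: fa_act_def fa_supp_def fa_sum_def)
qed (simp add: fa_sum_insert fa_act_add finite_fa_supp_sum)

lemma weyl_ideal_generator_eq: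
  "fa_mult (fa_mon u) (fa_mult weyl_rel (fa_mon v)) =
    fa_add (fa_mon (u @ [Qg, Pg] @ v))
      (fa_add (fa_smult (-1) (fa_mon (u @ [Pg, Qg] @ v))) (fa_smult (- \<i>) (fa_mon (u @ v))))"
  by (simp add: weyl_rel_def fa_q_def fa_p_def fa_one_def fa_mult_add_left fa_mult_add_right
      fa_mult_smult_left fa_mult_smult_right fa_mult_mon_mon)

lemma finite_fa_supp_weyl_ideal: "f \<in> weyl_ideal \<Longrightarrow> finite (fa_supp f)"
proof (induction rule: weyl_ideal.induct)
  case zero
  then show ?case by (simp add: fa_supp_def)
next
  case gen
  then show ?case
    unfolding weyl_ideal_generator_eq
    by (intro finite_fa_supp_add finite_fa_supp_smult) (simp_all add: fa_supp_mon)
qed (simp_all add: finite_fa_supp_add finite_fa_supp_smult)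

lemma fa_act_weyl_ideal: "f \<in> weyl_ideal \<Longrightarrow> fa_act f h = 0"
proof (induction rule: weyl_ideal.induct)
  case zero
  then show ?case by (simp add: fa_act_def fa_supp_def)
next
  case (gen u v)
  have "fa_act (fa_mult (fa_mon u) (fa_mult weyl_rel (fa_mon v))) h =
      word_act (u @ [Qg, Pg] @ v) h - word_act (u @ [Pg, Qg] @ v) h - smult \<i> (word_act (u @ v) h)"
    unfolding weyl_ideal_generator_eq
    by (simp add: fa_act_add fa_act_smult fa_supp_mon finite_fa_supp_add finite_fa_supp_smult fa_act_mon)
  also have "\<dots> = word_act u (word_act [Qg, Pg] (word_act v h) - word_act [Pg, Qg] (word_act v h)
      - smult \<i> (word_act v h))"
    by (simp only: word_act_append word_act_diff word_act_smult)
  also have "\<dots> = 0"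
    by (simp only: word_act_commutator) simp
  finally show ?case .
qed (simp_all add: fa_act_add fa_act_smult finite_fa_supp_weyl_ideal)

lemma weyl_eq_imp_fa_act_eq:
  assumes "weyl_eq f g" "finite (fa_supp f)" "finite (fa_supp g)"
  shows "fa_act f h = fa_act g h"
proof -
  have "fa_act (fa_add f (fa_smult (-1) g)) h = 0"
    using assms(1) by (simp add: weyl_eq_def fa_act_weyl_ideal)
  with assms(2,3) show ?thesis
    by (simp add: fa_act_add fa_act_smult finite_fa_supp_smult)
qed

lemma weyl_z_Suc_pow:
  "fa_pow weyl_z (Suc j) = fa_smult (1/2) (fa_add (fa_mult (fa_mon [Qg, Pg]) (fa_pow weyl_z j))
     (fa_mult (fa_mon [Pg, Qg]) (fa_pow weyl_z j)))"
  by (simp add: weyl_z_def fa_mult_smult_left fa_mult_add_left fa_q_def fa_p_def fa_mult_mon_mon)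

lemma finite_fa_supp_weyl_z_pow: "finite (fa_supp (fa_pow weyl_z j))"
proof (induction j)
  case 0
  then show ?case by (simp add: fa_one_def fa_supp_mon)
next
  case (Suc j)
  then show ?case
    unfolding weyl_z_Suc_pow
    by (simp add: fa_supp_mult_mon finite_fa_supp_add finite_fa_supp_smult)
qed

lemma fa_act_weyl_z_pow_1: "fa_act (fa_pow weyl_z j) 1 = [:(\<i>/2) ^ j:]"
proof (induction j)
  case 0
  then show ?case by (simp add: fa_one_def fa_act_mon)
next
  case (Suc j)
  have "fa_act (fa_pow weyl_z (Suc j)) 1 =
      smult (1/2) (word_act [Qg, Pg] [:(\<i>/2) ^ j:] + word_act [Pg, Qg] [:(\<i>/2) ^ j:])"
    unfolding weyl_z_Suc_pow using Suc finite_fa_supp_weyl_z_pow[of j]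
    by (simp add: fa_act_smult fa_act_add fa_act_mult_mon fa_supp_mult_mon
        finite_fa_supp_add)
  then show ?case
    by (simp add: pderiv_pCons mult.commute)
qed

lemma assoc_poly_diagonal_coeff:
  assumes "assoc_poly a n Q"
  shows "a n = poly Q (\<i> / 2) / (\<i> ^ n * fact n)"
proof -
  define word where "word k = replicate k Qg @ replicate n Pg @ replicate (n - k) Qg" for k
  define L where "L = fa_sum (\<lambda>k. fa_smult (a k) (fa_mon (word k))) {..n}"
  define R where "R = fa_sum (\<lambda>i. fa_smult (coeff Q i) (fa_pow weyl_z i)) {..degree Q}"
  have "weyl_eq L R"
    using assms by (simp add: assoc_poly_def L_def R_def word_def fa_poly_def fa_q_def fa_p_def
        fa_pow_mon_single fa_mult_mon_mon)
  moreover have finite_L: "finite (fa_supp L)" and finite_R: "finite (fa_supp R)"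
    unfolding L_def R_def
    by (simp_all add: finite_fa_supp_sum finite_fa_supp_smult fa_supp_mon finite_fa_supp_weyl_z_pow)
  ultimately have "coeff (fa_act L 1) 0 = coeff (fa_act R 1) 0"
    using weyl_eq_imp_fa_act_eq by metis
  moreover have "coeff (fa_act L 1) 0 = a n * (\<i> ^ n * fact n)"
  proof -
    have "coeff (fa_act L 1) 0 = (\<Sum>k\<le>n. a k * (if k = n then \<i> ^ n * fact n else 0))"
      unfolding L_def
      by (simp add: fa_act_sum finite_fa_supp_smult fa_supp_mon fa_act_smult fa_act_mon coeff_sum
          word_def coeff_0_word_act_normal_ordered)
    then show ?thesis
      by (simp add: if_distrib sum.delta cong: if_cong)
  qed
  moreover have "coeff (fa_act R 1) 0 = poly Q (\<i> / 2)"
    unfolding R_def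
    by (simp add: fa_act_sum finite_fa_supp_smult finite_fa_supp_weyl_z_pow fa_act_smult
        fa_act_weyl_z_pow_1 coeff_sum poly_altdef)
  ultimately show ?thesis
    by (simp add: field_simps)
qed

theorem proposition3p3:
  fixes a :: "nat \<Rightarrow> nat \<Rightarrow> complex" and P :: "nat \<Rightarrow> complex poly"
  assumes "\<And>n. assoc_poly (a n) n (P n)"
  shows "(\<forall>n. a n n = poly (P n) (\<i> / 2) / (\<i> ^ n * fact n)) \<and>
         Abs_fps (\<lambda>n. a n n) =
           fps_compose (eval_coeffs (gen_series P) (\<i> / 2)) (fps_const (1 / \<i>) * fps_X)"
proof -
  have diagonal: "a n n = poly (P n) (\<i> / 2) / (\<i> ^ n * fact n)" for n
    using assoc_poly_diagonal_coeff[OF assms] .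
  have i_pow_inverse: "\<i> ^ n * (- \<i>) ^ n = 1" for n
    by (simp add: power_mult_distrib[symmetric])
  have "fps_compose (eval_coeffs (gen_series P) (\<i> / 2)) (fps_const (1 / \<i>) * fps_X)
      = Abs_fps (\<lambda>n. (1 / \<i>) ^ n * (poly (P n) (\<i> / 2) / fact n))"
    by (simp add: fps_compose_linear eval_coeffs_def gen_series_def)
  also have "\<dots> = Abs_fps (\<lambda>n. a n n)"
    by (rule arg_cong[where f = Abs_fps], rule ext) (simp add: diagonal power_one_over field_simps i_pow_inverse)
  finally show ?thesis
    using diagonal by simp
qed

end
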